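(* Let $R$ be a commutative ring with identity. If $\gamma_t(\Gamma(R))=3$, then $\gamma(\Gamma(R))=3$.
   Context: All rings are commutative with identity. The zero-divisor graph $\Gamma(R)$ has vertex set $Z(R)^*$ (nonzero zero-divisors); distinct $r,s$ are adjacent iff $rs=0$, and $x$ is adjacent to itself iff $x^2=0$. A dominating set is $X\subseteq Z(R)^*$ such that every vertex not in $X$ is adjacent to some element of $X$; a total dominating set is $X$ such that every vertex (including those in $X$) is adjacent to some element of $X$ (self-adjacency counts). $\gamma,\gamma_t$ are the respective minimum cardinalities. *)

theory Defs
  imports Main "HOL-Library.Extended_Nat"
begin

text \<open>Nonzero zero-divisors Z(R)* of a commutative ring with identity (vertex set of the zero-divisor graph).\<close>
definition zd_star :: "'a::comm_ring_1 set" where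
  "zd_star = {x. x \<noteq> 0 \<and> (\<exists>y. y \<noteq> 0 \<and> x * y = 0)}"

text \<open>Adjacency in the zero-divisor graph: distinct r, s adjacent iff rs = 0; x adjacent to itself iff x^2 = 0.\<close>
definition zd_adj :: "'a::comm_ring_1 \<Rightarrow> 'a \<Rightarrow> bool" where
  "zd_adj r s \<longleftrightarrow> r \<in> zd_star \<and> s \<in> zd_star \<and> r * s = 0"

definition zd_dominating :: "'a::comm_ring_1 set \<Rightarrow> bool" where
  "zd_dominating X \<longleftrightarrow> X \<subseteq> zd_star \<and> (\<forall>v \<in> zd_star - X. \<exists>x \<in> X. zd_adj v x)"

definition zd_total_dominating :: "'a::comm_ring_1 set \<Rightarrow> bool" where
  "zd_total_dominating X \<longleftrightarrow> X \<subseteq> zd_star \<and> (\<forall>v \<in> zd_star. \<exists>x \<in> X. zd_adj v x)"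

definition ecard :: "'b set \<Rightarrow> enat" where
  "ecard X = (if finite X then enat (card X) else \<infinity>)"

definition zd_gamma :: "'a::comm_ring_1 itself \<Rightarrow> enat" where
  "zd_gamma _ = Inf (ecard ` {X :: 'a set. zd_dominating X})"

definition zd_gamma_t :: "'a::comm_ring_1 itself \<Rightarrow> enat" where
  "zd_gamma_t _ = Inf (ecard ` {X :: 'a set. zd_total_dominating X})"

end

theory Submission
  imports Defs
begin

text \<open>
  Every total dominating set is dominating, so \<open>\<gamma> \<le> \<gamma>\<^sub>t\<close>; it remains to turn a dominating set
  of size at most two into a total dominating set of size at most two. If \<open>{a, b}\<close> dominates
  and \<open>ab \<noteq> 0\<close>, then \<open>c = ab\<close> annihilates every vertex outside \<open>{a, b}\<close>, and \<open>c\<close> itself is either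
  \<open>a\<close>, \<open>b\<close> or a neighbour of \<open>a\<close> or \<open>b\<close>; say \<open>c = a\<close> or \<open>ca = 0\<close>. Then \<open>c\<close> together with any
  neighbour \<open>w\<close> of \<open>b\<close> is total dominating, as \<open>cw = a(bw) = 0\<close>.
\<close>

lemma zd_starI: "(x::'a::comm_ring_1) \<noteq> 0 \<Longrightarrow> y \<noteq> 0 \<Longrightarrow> x * y = 0 \<Longrightarrow> x \<in> zd_star"
  unfolding zd_star_def by blast

lemma zd_star_nonzero: "x \<in> zd_star \<Longrightarrow> x \<noteq> 0"
  unfolding zd_star_def by blast

lemma zd_star_obtains_neighbour:
  assumes "(x::'a::comm_ring_1) \<in> zd_star"
  obtains y where "y \<in> zd_star" and "x * y = 0"
proof -
  from assms obtain y where y: "y \<noteq> 0" "x * y = 0" and "x \<noteq> 0"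
    unfolding zd_star_def by blast
  then have "y \<in> zd_star" by (intro zd_starI[of y x]) (simp_all add: mult.commute)
  with y show thesis using that by blast
qed

lemma zd_total_dominatingI:
  "Y \<subseteq> zd_star \<Longrightarrow> (\<And>v. v \<in> zd_star \<Longrightarrow> \<exists>y\<in>Y. v * y = 0) \<Longrightarrow> zd_total_dominating Y"
  unfolding zd_total_dominating_def zd_adj_def by blast

lemma zd_total_dominating_imp_dominating: "zd_total_dominating X \<Longrightarrow> zd_dominating X"
  unfolding zd_total_dominating_def zd_dominating_def by blast

lemma zd_dominating_empty_imp_total_dominating:
  "zd_dominating ({} :: 'a::comm_ring_1 set) \<Longrightarrow> zd_total_dominating ({} :: 'a set)"
  unfolding zd_dominating_def zd_total_dominating_def by blast

lemma zd_dominating_pairD: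
  assumes "zd_dominating {a, b :: 'a::comm_ring_1}" and "v \<in> zd_star" and "v \<noteq> a" and "v \<noteq> b"
  shows "v * a = 0 \<or> v * b = 0"
  using assms unfolding zd_dominating_def zd_adj_def by blast

lemma zd_dominating_pair_product_annihilates:
  assumes "zd_dominating {a, b :: 'a::comm_ring_1}" and "v \<in> zd_star" and "v \<noteq> a" and "v \<noteq> b"
  shows "a * b * v = 0"
proof -
  have "a * b * v = b * (v * a)" "a * b * v = a * (v * b)" by (simp_all add: ac_simps)
  with zd_dominating_pairD[OF assms] show ?thesis by (metis mult_zero_right)
qed

lemma zd_total_dominating_from_dominating_pair:
  fixes a b w :: "'a::comm_ring_1"
  assumes dom: "zd_dominating {a, b}" and ab: "a * b \<noteq> 0"
    and w: "w \<in> zd_star" "b * w = 0"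
    and ab_covers_a: "a * b = a \<or> a * b * a = 0"
  shows "zd_total_dominating {a * b, w}"
proof (rule zd_total_dominatingI)
  have cw: "a * b * w = 0" using w(2) by (simp add: mult.assoc)
  then show "{a * b, w} \<subseteq> zd_star"
    using w zd_starI[OF ab zd_star_nonzero] by blast
  fix v :: 'a assume v: "v \<in> zd_star"
  consider "v = a" | "v = b" | "v \<noteq> a" "v \<noteq> b" by blast
  then show "\<exists>y\<in>{a * b, w}. v * y = 0"
  proof cases
    case 1
    then show ?thesis using ab_covers_a cw by (auto simp: mult.commute)
  next
    case 2
    then show ?thesis using w(2) by blast
  next
    case 3
    then show ?thesis
      using zd_dominating_pair_product_annihilates[OF dom v] by (auto simp: mult.commute)
  qed
qed

lemma zd_dominating_pair_imp_total_dominating_pair: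
  fixes a b :: "'a::comm_ring_1"
  assumes dom: "zd_dominating {a, b}"
  shows "\<exists>c w :: 'a. zd_total_dominating {c, w}"
proof (cases "a * b = 0")
  case True
  have "zd_total_dominating {a, b}"
  proof (rule zd_total_dominatingI)
    show "{a, b} \<subseteq> zd_star" using dom unfolding zd_dominating_def by blast
    show "\<exists>y\<in>{a, b}. v * y = 0" if "v \<in> zd_star" for v
      using zd_dominating_pairD[OF dom that] True by (cases "v = a \<or> v = b") (auto simp: mult.commute)
  qed
  then show ?thesis by blast
next
  case False
  have "a \<in> zd_star" "b \<in> zd_star" using dom unfolding zd_dominating_def by blast+
  then obtain wa wb where wa: "wa \<in> zd_star" "a * wa = 0" and wb: "wb \<in> zd_star" "b * wb = 0"
    by (meson zd_star_obtains_neighbour)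
  have "a * b \<in> zd_star"
    using zd_starI[OF False zd_star_nonzero[OF wb(1)]] wb(2) by (simp add: mult.assoc)
  then consider "a * b = a \<or> a * b * a = 0" | "a * b = b \<or> a * b * b = 0"
    using zd_dominating_pairD[OF dom] by blast
  then show ?thesis
  proof cases
    case 1
    then show ?thesis using zd_total_dominating_from_dominating_pair[OF dom False wb] by blast
  next
    case 2
    have "zd_dominating {b, a}" using dom by (simp add: insert_commute)
    then have "zd_total_dominating {b * a, wa}"
      by (rule zd_total_dominating_from_dominating_pair) (use False wa 2 in \<open>simp_all add: mult.commute\<close>)
    then show ?thesis by blast
  qed
qed

lemma ecard_le_2_cases:
  assumes "ecard X \<le> 2"
  obtains "X = {}" | a b where "X = {a, b}"
proof -
  have fin: "finite X" and "card X \<le> 2"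
    using assms unfolding ecard_def by (auto split: if_splits simp: numeral_eq_enat)
  then consider "card X = 0" | "card X = 1" | "card X = 2" by linarith
  then show thesis
  proof cases
    case 1
    with fin show thesis using that(1) by simp
  next
    case 2
    then obtain a where "X = {a}" by (rule card_1_singletonE)
    then have "X = {a, a}" by simp
    then show thesis by (rule that(2))
  next
    case 3
    then obtain a b where "X = {a, b}" by (auto simp: card_2_iff)
    then show thesis by (rule that(2))
  qed
qed

lemma ecard_pair_le_2: "ecard {a, b} \<le> 2"
  unfolding ecard_def by (simp add: card_insert_le_m1 numeral_eq_enat)

lemma INF_enat_le_imp_ex:
  fixes f :: "'b \<Rightarrow> enat"
  assumes "Inf (f ` S) \<le> enat n"
  shows "\<exists>X\<in>S. f X \<le> enat n"
proof -
  have "S \<noteq> {}" using assms by (auto simp: Inf_enat_def)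
  then have "Inf (f ` S) \<in> f ` S" by (blast intro: wellorder_InfI)
  with assms show ?thesis by auto
qed

lemma zd_gamma_le_gamma_t: "zd_gamma TYPE('a::comm_ring_1) \<le> zd_gamma_t TYPE('a)"
  unfolding zd_gamma_def zd_gamma_t_def
  by (intro Inf_superset_mono image_mono) (auto intro: zd_total_dominating_imp_dominating)

lemma zd_gamma_t_le_2_if_gamma_le_2:
  assumes "zd_gamma TYPE('a::comm_ring_1) \<le> 2"
  shows "zd_gamma_t TYPE('a) \<le> 2"
proof -
  from assms obtain X :: "'a set" where X: "zd_dominating X" "ecard X \<le> 2"
    unfolding zd_gamma_def using INF_enat_le_imp_ex[of ecard _ 2] by (auto simp: numeral_eq_enat)
  have "\<exists>Y :: 'a set. zd_total_dominating Y \<and> ecard Y \<le> 2"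
    using X(2)
  proof (cases rule: ecard_le_2_cases)
    case 1
    then show ?thesis
      using X zd_dominating_empty_imp_total_dominating by blast
  next
    case (2 a b)
    then show ?thesis
      using X(1) zd_dominating_pair_imp_total_dominating_pair ecard_pair_le_2 by metis
  qed
  then obtain Y :: "'a set" where "zd_total_dominating Y" and "ecard Y \<le> 2" by blast
  then have "zd_gamma_t TYPE('a) \<le> ecard Y" unfolding zd_gamma_t_def by (intro Inf_lower imageI) simp
  then show ?thesis using \<open>ecard Y \<le> 2\<close> by (rule order_trans)
qed

theorem proposition4p1:
  assumes "zd_gamma_t TYPE('a::comm_ring_1) = 3"
  shows "zd_gamma TYPE('a) = 3"
proof -
  have "zd_gamma TYPE('a) \<le> 3" using zd_gamma_le_gamma_t assms by metis
  moreover have "\<not> zd_gamma TYPE('a) \<le> 2"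
  proof
    assume "zd_gamma TYPE('a) \<le> 2"
    then have "zd_gamma_t TYPE('a) \<le> 2" by (rule zd_gamma_t_le_2_if_gamma_le_2)
    with assms show False by (simp add: numeral_eq_enat)
  qed
  ultimately show ?thesis by (cases "zd_gamma TYPE('a)") (auto simp: numeral_eq_enat)
qed

end
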